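(* Let $\kappa$ be a constant and $q_1,q_2,t_1,t_2,v$ indeterminates. Let $V_0(q_1,q_2,t_1,t_2)$ be the coefficient of $z^0$ in $$V(z;q_1,t_1,q_2,t_2)=\exp\Big(\sum_{k\ge1}(q_1^k-q_2^k)\mathfrak a_{-k}\frac{z^k}{k}\Big)\exp\Big(\sum_{k\ge1}(t_2^k-t_1^k)\mathfrak a_k\frac{z^{-k}}{k}\Big).$$ Then $$\big\langle V_0(q_1,q_2,t_1,t_2)\big\rangle_v=\left[\frac{(q_1t_1v)_\infty\,(q_2t_2v)_\infty}{(q_1t_2v)_\infty\,(q_2t_1v)_\infty}\right]^{\kappa}.$$
   Context: The Heisenberg algebra is generated by a central element $\mathrm I$ and $\mathfrak a_n$, $n\in\mathbb Z$, with $[\mathfrak a_m,\mathfrak a_n]=\kappa m\delta_{m,-n}\mathrm I$. The Fock space $B$ is the irreducible representation generated by a vector $|0\rangle$ with $\mathrm I|0\rangle=|0\rangle$, $\mathfrak a_n|0\rangle=0$ for $n\ge0$; it has basis $\mathfrak a_{-\lambda}=\mathfrak a_{-\lambda_1}\mathfrak a_{-\lambda_2}\cdots|0\rangle$ over partitions $\lambda$. The energy operator $L_0$ acts on $\mathfrak a_{-\lambda}$ by multiplication by $|\lambda|$. For an operator $\Delta$ on $B$ preserving degree, $\langle \Delta\rangle_v:=(v)_\infty\,\mathrm{Tr}_B(v^{L_0}\Delta)$, a formal power series in $v$. Notation: $(a)_\infty=\prod_{i\ge0}(1-av^i)$, and $[\,\cdot\,]^\kappa$ is $\exp(\kappa\log(\cdot))$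 with the logarithm expanded as a formal power series. *)

theory Defs
  imports Complex_Main "HOL-Library.Multiset" "HOL-Computational_Algebra.Formal_Power_Series"
begin

text \<open>A vector of the Fock space B is
represented by its coefficient function with respect to the basis a_{-lambda}
(indexed by partitions). The basis vector a_{-lambda} is basis_vec lambda.\<close>

type_synonym fock = "nat multiset \<Rightarrow> complex"

definition is_partition :: "nat multiset \<Rightarrow> bool" where
  "is_partition p \<longleftrightarrow> 0 \<notin># p"

definition partitions_of :: "nat \<Rightarrow> nat multiset set" where
  "partitions_of d = {p. is_partition p \<and> sum_mset p = d}"

definition basis_vec :: "nat multiset \<Rightarrow> fock" where
  "basis_vec p = (\<lambda>\<mu>. if \<mu> = p then 1 else 0)"

text \<open>Creation operator a_{-k} (k >= 1): a_{-k} a_{-lambda} = a_{-(lambda + k)}.\<close>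
definition a_minus :: "nat \<Rightarrow> fock \<Rightarrow> fock" where
  "a_minus k f = (\<lambda>\<mu>. if k \<in># \<mu> then f (\<mu> - {#k#}) else 0)"

text \<open>Annihilation operator a_k (k >= 1): a_k a_{-lambda} = kappa k m_k(lambda) a_{-(lambda - k)},
which is forced by [a_m,a_n] = kappa m delta_{m,-n} I and a_k |0> = 0.\<close>
definition a_plus :: "complex \<Rightarrow> nat \<Rightarrow> fock \<Rightarrow> fock" where
  "a_plus \<kappa> k f = (\<lambda>\<mu>. \<kappa> * of_nat k * of_nat (count \<mu> k + 1) * f (\<mu> + {#k#}))"

definition scale_op :: "complex \<Rightarrow> (fock \<Rightarrow> fock) \<Rightarrow> fock \<Rightarrow> fock" where
  "scale_op c A f = (\<lambda>\<mu>. c * A f \<mu>)"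

definition sum_op :: "'i set \<Rightarrow> ('i \<Rightarrow> fock \<Rightarrow> fock) \<Rightarrow> fock \<Rightarrow> fock" where
  "sum_op I A f = (\<lambda>\<mu>. \<Sum>i\<in>I. A i f \<mu>)"

text \<open>Product X_{k_1} X_{k_2} ... X_{k_m} of operators (leftmost applied last).\<close>
definition prod_ops :: "(nat \<Rightarrow> fock \<Rightarrow> fock) \<Rightarrow> nat list \<Rightarrow> fock \<Rightarrow> fock" where
  "prod_ops X ks = foldr (\<lambda>k g. X k \<circ> g) ks id"

definition compositions :: "nat \<Rightarrow> nat \<Rightarrow> nat list set" where
  "compositions n m = {ks. length ks = m \<and> (\<forall>k\<in>set ks. 1 \<le> k) \<and> sum_list ks = n}"

text \<open>Coefficient of w^n in exp(sum_{k>=1} X_k w^k), for pairwise commuting operators X_k: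
  sum_m (1/m!) * (coefficient of w^n in (sum_k X_k w^k)^m).
  Only m <= n contribute (compositions of n into m positive parts).\<close>
definition exp_coeff :: "(nat \<Rightarrow> fock \<Rightarrow> fock) \<Rightarrow> nat \<Rightarrow> fock \<Rightarrow> fock" where
  "exp_coeff X n = sum_op {0..n}
     (\<lambda>m. scale_op (1 / of_nat (fact m)) (sum_op (compositions n m) (prod_ops X)))"

text \<open>E_-(z) = exp(sum (q1^k - q2^k) a_{-k} z^k / k): coefficient of z^n.\<close>
definition E_minus_coeff :: "complex \<Rightarrow> complex \<Rightarrow> nat \<Rightarrow> fock \<Rightarrow> fock" where
  "E_minus_coeff q1 q2 =
     exp_coeff (\<lambda>k. scale_op ((q1 ^ k - q2 ^ k) / of_nat k) (a_minus k))"

text \<open>E_+(z) = exp(sum (t2^k - t1^k) a_k z^{-k} / k): coefficient of z^{-n}.\<close>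
definition E_plus_coeff :: "complex \<Rightarrow> complex \<Rightarrow> complex \<Rightarrow> nat \<Rightarrow> fock \<Rightarrow> fock" where
  "E_plus_coeff \<kappa> t1 t2 =
     exp_coeff (\<lambda>k. scale_op ((t2 ^ k - t1 ^ k) / of_nat k) (a_plus \<kappa> k))"

text \<open>V_0 = coefficient of z^0 in V(z) = E_-(z) E_+(z), i.e. sum_n E_-[z^n] E_+[z^{-n}].
  The coefficient of a_{-mu} of E_-[z^n] g vanishes for n > |mu|, so the sum is finite
  pointwise; we sum over n = 0..|mu|.\<close>
definition V0 :: "complex \<Rightarrow> complex \<Rightarrow> complex \<Rightarrow> complex \<Rightarrow> complex \<Rightarrow> fock \<Rightarrow> fock" where
  "V0 \<kappa> q1 q2 t1 t2 f =
     (\<lambda>\<mu>. \<Sum>n\<in>{0..sum_mset \<mu>}. E_minus_coeff q1 q2 n (E_plus_coeff \<kappa> t1 t2 n f) \<mu>)"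

text \<open>Tr_B(v^{L_0} Delta) = sum_d v^d * Tr(Delta restricted to degree d).\<close>
definition graded_trace :: "(fock \<Rightarrow> fock) \<Rightarrow> complex fps" where
  "graded_trace \<Delta> = Abs_fps (\<lambda>d. \<Sum>p\<in>partitions_of d. \<Delta> (basis_vec p) p)"

text \<open>(c v)_infinity = prod_{i>=0} (1 - c v^{i+1}) as a formal power series in v;
  the coefficient of v^n is that of the finite product over i <= n.\<close>
definition qpoch_inf :: "complex \<Rightarrow> complex fps" where
  "qpoch_inf c = Abs_fps (\<lambda>n. fps_nth (\<Prod>i\<in>{0..n}. 1 - fps_const c * fps_X ^ (i + 1)) n)"

definition fock_expect :: "(fock \<Rightarrow> fock) \<Rightarrow> complex fps" where
  "fock_expect \<Delta> = qpoch_inf 1 * graded_trace \<Delta>"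

text \<open>[F]^kappa = exp(kappa log F) for F with constant term 1.\<close>
definition fps_pow_gen :: "complex fps \<Rightarrow> complex \<Rightarrow> complex fps" where
  "fps_pow_gen F \<kappa> = fps_exp \<kappa> oo (fps_ln 1 oo (F - 1))"

end

theory Submission
  imports Defs "HOL-Combinatorics.Multiset_Permutations"
begin

(* On the basis vector a_{-lambda} the diagonal entry of V_0 factorises over the distinct parts k
   of lambda: a part of multiplicity m contributes sum_j C(m,j) c_k^j / j!, the Laguerre value
   L_m(-c_k), where c_k = kappa (q1^k - q2^k)(t2^k - t1^k) / k.  Summing over partitions, the graded
   trace is prod_k Lag(c_k)(v^k) with the Laguerre generating function
   Lag(c)(x) = exp(c x/(1-x)) / (1-x).  The factors 1/(1-v^k) cancel against (v)_infinity, so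
   log <V_0>_v = sum_k c_k v^k/(1-v^k) = sum_n v^n sum_{k | n} c_k.  Expanding c_k and exchanging
   k with n/k shows that this is kappa times the logarithm of the ratio of q-Pochhammer symbols.
   Exponentials and logarithms are handled through the relation G' = G H' between a series G with
   constant term 1 and its logarithm H, which is closed under products, infinite products and the
   substitution x -> x^k. *)

unbundle fps_syntax

section \<open>Formal exponentials and infinite products\<close>

definition fps_eq_upto :: "nat \<Rightarrow> 'a::zero fps \<Rightarrow> 'a fps \<Rightarrow> bool" where
  "fps_eq_upto n A B \<longleftrightarrow> (\<forall>j\<le>n. A $ j = B $ j)"

lemma fps_eq_upto_refl [simp]: "fps_eq_upto n A A"
  by (simp add: fps_eq_upto_def)

lemma fps_eq_upto_mono: "fps_eq_upto n A B \<Longrightarrow> m \<le> n \<Longrightarrow> fps_eq_upto m A B"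
  by (simp add: fps_eq_upto_def)

lemma fps_eq_upto_mult:
  fixes A B C D :: "'a::comm_semiring_1 fps"
  shows "fps_eq_upto n A B \<Longrightarrow> fps_eq_upto n C D \<Longrightarrow> fps_eq_upto n (A * C) (B * D)"
  unfolding fps_eq_upto_def fps_mult_nth by (auto intro!: sum.cong)

lemma fps_eq_upto_prod:
  fixes f g :: "'i \<Rightarrow> 'a::comm_semiring_1 fps"
  assumes "\<And>i. i \<in> I \<Longrightarrow> fps_eq_upto n (f i) (g i)"
  shows "fps_eq_upto n (\<Prod>i\<in>I. f i) (\<Prod>i\<in>I. g i)"
  using assms by (induction I rule: infinite_finite_induct) (auto intro: fps_eq_upto_mult)

lemma fps_eq_upto_deriv:
  "fps_eq_upto (Suc n) A B \<Longrightarrow> fps_eq_upto n (fps_deriv A) (fps_deriv B)"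
  by (simp add: fps_eq_upto_def fps_deriv_nth)

lemma fps_eq_upto_compose:
  fixes a b :: "'a::comm_semiring_1 fps"
  assumes "b $ 0 = 0"
  shows "fps_eq_upto n (a oo b) (\<Sum>i\<in>{0..n}. fps_const (a $ i) * b ^ i)"
  unfolding fps_eq_upto_def
proof (intro allI impI)
  fix j assume "j \<le> n"
  then have "(\<Sum>i\<in>{0..n}. a $ i * (b ^ i) $ j) = (\<Sum>i\<in>{0..j}. a $ i * (b ^ i) $ j)"
    using startsby_zero_power_prefix[OF assms] by (intro sum.mono_neutral_right) auto
  then show "(a oo b) $ j = (\<Sum>i\<in>{0..n}. fps_const (a $ i) * b ^ i) $ j"
    by (simp add: fps_compose_nth fps_sum_nth)
qed

definition is_fps_exp :: "'a::field_char_0 fps \<Rightarrow> 'a fps \<Rightarrow> bool" where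
  "is_fps_exp G H \<longleftrightarrow> G $ 0 = 1 \<and> H $ 0 = 0 \<and> fps_deriv G = G * fps_deriv H"

lemma is_fps_exp_unique_exp:
  assumes "is_fps_exp G1 H" "is_fps_exp G2 H"
  shows "G1 = G2"
proof -
  have "\<forall>j\<le>n. G1 $ j = G2 $ j" for n
  proof (induction n)
    case 0
    then show ?case using assms by (simp add: is_fps_exp_def)
  next
    case (Suc n)
    have "fps_deriv G1 $ n = fps_deriv G2 $ n"
      using assms Suc unfolding is_fps_exp_def by (auto simp: fps_mult_nth intro!: sum.cong)
    then have "G1 $ Suc n = G2 $ Suc n"
      by (simp add: fps_deriv_nth del: of_nat_Suc)
    with Suc show ?case
      using le_Suc_eq by auto
  qed
  then show ?thesis
    by (auto simp: fps_eq_iff)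
qed

lemma is_fps_exp_unique_log:
  assumes "is_fps_exp G H1" "is_fps_exp G H2"
  shows "H1 = H2"
proof -
  have "G \<noteq> 0" "G * fps_deriv H1 = G * fps_deriv H2"
    using assms by (auto simp: is_fps_exp_def)
  then have "fps_deriv H1 = fps_deriv H2"
    by simp
  then show ?thesis
    using assms by (simp add: fps_deriv_eq_iff is_fps_exp_def)
qed

lemma is_fps_exp_one: "is_fps_exp 1 0"
  by (simp add: is_fps_exp_def)

lemma is_fps_exp_mult:
  "is_fps_exp G1 H1 \<Longrightarrow> is_fps_exp G2 H2 \<Longrightarrow> is_fps_exp (G1 * G2) (H1 + H2)"
  by (simp add: is_fps_exp_def fps_deriv_mult algebra_simps)

lemma is_fps_exp_prod:
  "(\<And>i. i \<in> I \<Longrightarrow> is_fps_exp (G i) (H i)) \<Longrightarrow> is_fps_exp (\<Prod>i\<in>I. G i) (\<Sum>i\<in>I. H i)"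
  by (induction I rule: infinite_finite_induct) (auto simp: is_fps_exp_one is_fps_exp_mult)

lemma is_fps_exp_inverse:
  assumes "is_fps_exp G H"
  shows "is_fps_exp (inverse G) (- H)"
proof -
  have G0: "G $ 0 = 1"
    using assms by (simp add: is_fps_exp_def)
  have "fps_deriv (inverse G) = - fps_deriv G * (inverse G)\<^sup>2"
    using G0 by (simp add: fps_inverse_deriv)
  also have "\<dots> = - (G * inverse G) * fps_deriv H * inverse G"
    using assms by (simp add: is_fps_exp_def power2_eq_square algebra_simps)
  also have "G * inverse G = 1"
    using G0 by (simp add: inverse_mult_eq_1')
  finally show ?thesis
    using assms G0 by (simp add: is_fps_exp_def algebra_simps)
qed

lemma is_fps_exp_compose:
  "is_fps_exp G H \<Longrightarrow> K $ 0 = 0 \<Longrightarrow> is_fps_exp (G oo K) (H oo K)"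
  by (simp add: is_fps_exp_def fps_compose_deriv fps_compose_mult_distrib algebra_simps)

lemma is_fps_exp_fps_exp:
  assumes "H $ 0 = 0"
  shows "is_fps_exp (fps_exp c oo H) (fps_const c * H)"
proof -
  have "fps_deriv (fps_exp c oo H) = (fps_const c * fps_exp c oo H) * fps_deriv H"
    using assms by (simp add: fps_compose_deriv)
  also have "fps_const c * fps_exp c oo H = fps_const c * (fps_exp c oo H)"
    by (simp add: fps_const_mult_apply_left)
  finally show ?thesis
    using assms by (simp add: is_fps_exp_def algebra_simps)
qed

lemma is_fps_exp_fps_ln:
  assumes F0: "F $ 0 = 1"
  shows "is_fps_exp F (fps_ln 1 oo (F - 1))"
proof -
  have K0: "(F - 1) $ 0 = 0"
    using F0 by simp
  have "fps_deriv (fps_ln 1 oo (F - 1)) = (inverse (1 + fps_X) oo (F - 1)) * fps_deriv F"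
    using K0 by (simp add: fps_compose_deriv fps_ln_deriv)
  also have "inverse (1 + fps_X) oo (F - 1) = inverse ((1 + fps_X) oo (F - 1))"
    using K0 by (intro fps_inverse_compose) auto
  also have "(1 + fps_X) oo (F - 1) = F"
    using K0 by (simp add: fps_compose_add_distrib)
  finally have "F * fps_deriv (fps_ln 1 oo (F - 1)) = (F * inverse F) * fps_deriv F"
    by (simp add: algebra_simps)
  also have "F * inverse F = 1"
    using F0 by (simp add: inverse_mult_eq_1')
  finally show ?thesis
    using F0 by (simp add: is_fps_exp_def fps_ln_def)
qed

lemma is_fps_exp_fps_pow_gen:
  assumes "is_fps_exp F H"
  shows "is_fps_exp (fps_pow_gen F \<kappa>) (fps_const \<kappa> * H)"
proof -
  have "F $ 0 = 1" "H $ 0 = 0"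
    using assms by (simp_all add: is_fps_exp_def)
  then have "fps_ln 1 oo (F - 1) = H"
    using assms by (intro is_fps_exp_unique_log[OF is_fps_exp_fps_ln])
  with \<open>H $ 0 = 0\<close> show ?thesis
    by (simp add: fps_pow_gen_def is_fps_exp_fps_exp)
qed

(* Only meaningful when the i-th factor is 1 + O(X^(i+1)), resp. the i-th summand is O(X^(i+1)). *)
definition fps_infprod :: "(nat \<Rightarrow> 'a::comm_semiring_1 fps) \<Rightarrow> 'a fps" where
  "fps_infprod g = Abs_fps (\<lambda>n. (\<Prod>i\<in>{0..n}. g i) $ n)"

definition fps_infsum :: "(nat \<Rightarrow> 'a::comm_monoid_add fps) \<Rightarrow> 'a fps" where
  "fps_infsum h = Abs_fps (\<lambda>n. (\<Sum>i\<in>{0..n}. h i) $ n)"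

lemma fps_eq_upto_infprod:
  fixes g :: "nat \<Rightarrow> 'a::comm_semiring_1 fps"
  assumes g: "\<And>i. fps_eq_upto i (g i) 1" and "n \<le> N"
  shows "fps_eq_upto n (fps_infprod g) (\<Prod>i\<in>{0..N}. g i)"
proof -
  have "fps_eq_upto m (\<Prod>i\<in>{0..N}. g i) (\<Prod>i\<in>{0..m}. g i)" if "m \<le> N" for m
  proof -
    have "{0..N} = {0..m} \<union> {Suc m..N}"
      using that by auto
    then have "(\<Prod>i\<in>{0..N}. g i) = (\<Prod>i\<in>{0..m}. g i) * (\<Prod>i\<in>{Suc m..N}. g i)"
      by (simp add: prod.union_disjoint)
    moreover have "fps_eq_upto m (\<Prod>i\<in>{Suc m..N}. g i) (\<Prod>i\<in>{Suc m..N}. 1)"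
      by (intro fps_eq_upto_prod) (auto intro: fps_eq_upto_mono[OF g])
    ultimately show ?thesis
      using fps_eq_upto_mult[OF fps_eq_upto_refl[of m "\<Prod>i\<in>{0..m}. g i"]]
      by (metis mult_1_right prod.neutral_const)
  qed
  note trunc = this
  show ?thesis
    unfolding fps_eq_upto_def
  proof (intro allI impI)
    fix j assume "j \<le> n"
    then have "fps_eq_upto j (\<Prod>i\<in>{0..N}. g i) (\<Prod>i\<in>{0..j}. g i)"
      using \<open>n \<le> N\<close> by (intro trunc) simp
    then show "fps_infprod g $ j = (\<Prod>i\<in>{0..N}. g i) $ j"
      by (simp add: fps_eq_upto_def fps_infprod_def)
  qed
qed

lemma fps_eq_upto_infsum:
  fixes h :: "nat \<Rightarrow> 'a::comm_monoid_add fps"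
  assumes h: "\<And>i. fps_eq_upto i (h i) 0" and "n \<le> N"
  shows "fps_eq_upto n (fps_infsum h) (\<Sum>i\<in>{0..N}. h i)"
proof -
  have "fps_eq_upto m (\<Sum>i\<in>{0..N}. h i) (\<Sum>i\<in>{0..m}. h i)" if "m \<le> N" for m
  proof -
    have "{0..N} = {0..m} \<union> {Suc m..N}"
      using that by auto
    then have "(\<Sum>i\<in>{0..N}. h i) = (\<Sum>i\<in>{0..m}. h i) + (\<Sum>i\<in>{Suc m..N}. h i)"
      by (simp add: sum.union_disjoint)
    moreover have "(\<Sum>i\<in>{Suc m..N}. h i) $ j = 0" if "j \<le> m" for j
      using h that by (auto simp: fps_sum_nth fps_eq_upto_def intro!: sum.neutral)
    ultimately show ?thesis
      by (simp add: fps_eq_upto_def)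
  qed
  note trunc = this
  show ?thesis
    unfolding fps_eq_upto_def
  proof (intro allI impI)
    fix j assume "j \<le> n"
    then have "fps_eq_upto j (\<Sum>i\<in>{0..N}. h i) (\<Sum>i\<in>{0..j}. h i)"
      using \<open>n \<le> N\<close> by (intro trunc) simp
    then show "fps_infsum h $ j = (\<Sum>i\<in>{0..N}. h i) $ j"
      by (simp add: fps_eq_upto_def fps_infsum_def)
  qed
qed

lemma fps_infsum_add: "fps_infsum f + fps_infsum g = fps_infsum (\<lambda>i. f i + g i)"
  by (simp add: fps_eq_iff fps_infsum_def sum.distrib)

lemma is_fps_exp_infprod:
  assumes g: "\<And>i. fps_eq_upto i (g i) 1" and h: "\<And>i. fps_eq_upto i (h i) 0"
    and exp: "\<And>i. is_fps_exp (g i) (h i)"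
  shows "is_fps_exp (fps_infprod g) (fps_infsum h)"
proof -
  have "fps_deriv (fps_infprod g) $ n = (fps_infprod g * fps_deriv (fps_infsum h)) $ n" for n
  proof -
    let ?P = "\<Prod>i\<in>{0..Suc n}. g i" and ?S = "\<Sum>i\<in>{0..Suc n}. h i"
    have P: "fps_eq_upto (Suc n) (fps_infprod g) ?P"
      using g by (rule fps_eq_upto_infprod) simp
    have S: "fps_eq_upto (Suc n) (fps_infsum h) ?S"
      using h by (rule fps_eq_upto_infsum) simp
    have "fps_deriv ?P = ?P * fps_deriv ?S"
      using is_fps_exp_prod[of "{0..Suc n}" g h] exp by (simp add: is_fps_exp_def)
    moreover have "fps_eq_upto n (fps_deriv (fps_infprod g)) (fps_deriv ?P)"
      using P by (rule fps_eq_upto_deriv)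
    moreover have "fps_eq_upto n (fps_infprod g * fps_deriv (fps_infsum h)) (?P * fps_deriv ?S)"
      using P S by (intro fps_eq_upto_mult fps_eq_upto_deriv) (auto intro: fps_eq_upto_mono)
    ultimately show ?thesis
      by (simp add: fps_eq_upto_def)
  qed
  moreover have "fps_infprod g $ 0 = 1" "fps_infsum h $ 0 = 0"
    using exp by (simp_all add: fps_infprod_def fps_infsum_def is_fps_exp_def)
  ultimately show ?thesis
    by (simp add: is_fps_exp_def fps_eq_iff)
qed

lemma fps_compose_X_power_nth:
  fixes a :: "'a::comm_semiring_1 fps"
  assumes "0 < m"
  shows "(a oo fps_X ^ m) $ n = (if m dvd n then a $ (n div m) else 0)"
proof -
  have "(a oo fps_X ^ m) $ n = (\<Sum>i\<in>{0..n}. if i = n div m \<and> m dvd n then a $ i else 0)"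
    using assms by (auto simp: fps_compose_nth simp flip: power_mult intro!: sum.cong)
  also have "\<dots> = (if m dvd n then a $ (n div m) else 0)"
    by (auto simp: sum.delta')
  finally show ?thesis .
qed

lemma fps_eq_upto_compose_X_power:
  fixes a :: "'a::comm_semiring_1 fps"
  assumes "0 < m" "n < m"
  shows "fps_eq_upto n (a oo fps_X ^ m) (fps_const (a $ 0))"
  using assms by (auto simp: fps_eq_upto_def fps_compose_X_power_nth dest: dvd_imp_le)

lemma is_fps_exp_infprod_compose_X_power:
  assumes "\<And>k. is_fps_exp (F k) (H k)"
  shows "is_fps_exp (fps_infprod (\<lambda>i. F (Suc i) oo fps_X ^ Suc i))
                    (fps_infsum (\<lambda>i. H (Suc i) oo fps_X ^ Suc i))"
proof (rule is_fps_exp_infprod)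
  fix i
  have "F (Suc i) $ 0 = 1" "H (Suc i) $ 0 = 0"
    using assms by (simp_all add: is_fps_exp_def)
  then show "fps_eq_upto i (F (Suc i) oo fps_X ^ Suc i) 1"
    and "fps_eq_upto i (H (Suc i) oo fps_X ^ Suc i) 0"
    using fps_eq_upto_compose_X_power[of "Suc i" i "F (Suc i)"]
      fps_eq_upto_compose_X_power[of "Suc i" i "H (Suc i)"] by (simp_all del: power_Suc)
  show "is_fps_exp (F (Suc i) oo fps_X ^ Suc i) (H (Suc i) oo fps_X ^ Suc i)"
    using assms by (intro is_fps_exp_compose) auto
qed

lemma fps_infsum_compose_X_power_nth:
  fixes H :: "nat \<Rightarrow> 'a::comm_semiring_1 fps"
  assumes "0 < n"
  shows "fps_infsum (\<lambda>i. H (Suc i) oo fps_X ^ Suc i) $ n = (\<Sum>k | k dvd n. H k $ (n div k))"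
proof -
  have "fps_infsum (\<lambda>i. H (Suc i) oo fps_X ^ Suc i) $ n
      = (\<Sum>i\<in>{0..n}. if Suc i dvd n then H (Suc i) $ (n div Suc i) else 0)"
    unfolding fps_infsum_def fps_nth_Abs_fps fps_sum_nth
    by (intro sum.cong refl fps_compose_X_power_nth) simp
  also have "\<dots> = (\<Sum>k\<in>{Suc 0..Suc n}. if k dvd n then H k $ (n div k) else 0)"
    by (rule sum.shift_bounds_cl_Suc_ivl[symmetric])
  also have "\<dots> = (\<Sum>k\<in>{k\<in>{Suc 0..Suc n}. k dvd n}. H k $ (n div k))"
    by (rule sum.inter_filter[symmetric]) simp
  also have "{k\<in>{Suc 0..Suc n}. k dvd n} = {k. k dvd n}"
    using assms by (auto dest: dvd_imp_le intro: Suc_leI gr0I)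
  finally show ?thesis .
qed

section \<open>Multisets with prescribed multiplicities\<close>

definition msets_with_counts :: "'a set \<Rightarrow> ('a \<Rightarrow> nat set) \<Rightarrow> 'a multiset set" where
  "msets_with_counts K A = {\<nu>. set_mset \<nu> \<subseteq> K \<and> (\<forall>k\<in>K. count \<nu> k \<in> A k)}"

lemma msets_with_counts_empty [simp]: "msets_with_counts {} A = {{#}}"
  by (auto simp: msets_with_counts_def)

lemma msets_with_counts_insert:
  assumes "k \<notin> K"
  shows "msets_with_counts (insert k K) A
           = (\<lambda>(j, \<nu>). \<nu> + replicate_mset j k) ` (A k \<times> msets_with_counts K A)"
proof (intro equalityI subsetI)
  fix \<mu> assume \<mu>: "\<mu> \<in> msets_with_counts (insert k K) A"
  define \<nu> where "\<nu> = \<mu> - replicate_mset (count \<mu> k) k"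
  have count_\<nu>: "count \<nu> x = (if x = k then 0 else count \<mu> x)" for x
    by (simp add: \<nu>_def)
  have "\<mu> = \<nu> + replicate_mset (count \<mu> k) k"
    by (simp add: multiset_eq_iff count_\<nu>)
  moreover have "set_mset \<nu> \<subseteq> K"
  proof
    fix x assume "x \<in># \<nu>"
    then have "x \<noteq> k" "x \<in># \<mu>"
      by (metis count_\<nu> count_eq_zero_iff)+
    then show "x \<in> K"
      using \<mu> by (auto simp: msets_with_counts_def)
  qed
  then have "\<nu> \<in> msets_with_counts K A"
    using \<mu> assms by (auto simp: msets_with_counts_def count_\<nu>)
  moreover have "count \<mu> k \<in> A k"
    using \<mu> by (simp add: msets_with_counts_def)
  ultimately show "\<mu> \<in> (\<lambda>(j, \<nu>). \<nu> + replicate_mset j k) ` (A k \<times> msets_with_counts K A)"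
    by force
next
  fix \<mu> assume "\<mu> \<in> (\<lambda>(j, \<nu>). \<nu> + replicate_mset j k) ` (A k \<times> msets_with_counts K A)"
  then obtain j \<nu> where "j \<in> A k" "\<nu> \<in> msets_with_counts K A" "\<mu> = \<nu> + replicate_mset j k"
    by auto
  moreover have "count \<nu> k = 0"
    using \<open>\<nu> \<in> msets_with_counts K A\<close> assms by (auto simp: msets_with_counts_def count_eq_zero_iff)
  ultimately show "\<mu> \<in> msets_with_counts (insert k K) A"
    by (auto simp: msets_with_counts_def)
qed

lemma inj_on_msets_with_counts_insert:
  assumes "k \<notin> K"
  shows "inj_on (\<lambda>(j, \<nu>). \<nu> + replicate_mset j k) (A k \<times> msets_with_counts K A)"
proof (rule inj_onI, clarify)
  fix j \<nu> j' \<nu>'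
  assume "\<nu> \<in> msets_with_counts K A" "\<nu>' \<in> msets_with_counts K A"
    and eq: "\<nu> + replicate_mset j k = \<nu>' + replicate_mset j' k"
  then have "count \<nu> k = 0" "count \<nu>' k = 0"
    using assms by (auto simp: msets_with_counts_def count_eq_zero_iff)
  with arg_cong[OF eq, of "\<lambda>\<mu>. count \<mu> k"] have "j = j'"
    by simp
  with eq show "j = j' \<and> \<nu> = \<nu>'"
    by simp
qed

lemma finite_msets_with_counts:
  "finite K \<Longrightarrow> (\<And>k. k \<in> K \<Longrightarrow> finite (A k)) \<Longrightarrow> finite (msets_with_counts K A)"
  by (induction K rule: finite_induct) (simp_all add: msets_with_counts_insert)

lemma prod_sum_eq_sum_msets_with_counts:
  fixes f :: "'a \<Rightarrow> nat \<Rightarrow> 'b::comm_semiring_1"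
  assumes "finite K" "\<And>k. k \<in> K \<Longrightarrow> finite (A k)"
  shows "(\<Prod>k\<in>K. \<Sum>j\<in>A k. f k j) = (\<Sum>\<nu>\<in>msets_with_counts K A. \<Prod>k\<in>K. f k (count \<nu> k))"
  using assms
proof (induction K rule: finite_induct)
  case (insert k K)
  have count_k: "count \<nu> k = 0" if "\<nu> \<in> msets_with_counts K A" for \<nu>
    using that insert.hyps by (auto simp: msets_with_counts_def count_eq_zero_iff)
  have "(\<Prod>k\<in>insert k K. \<Sum>j\<in>A k. f k j)
      = (\<Sum>(j, \<nu>)\<in>A k \<times> msets_with_counts K A. f k j * (\<Prod>k\<in>K. f k (count \<nu> k)))"
    using insert by (simp add: sum_product sum.cartesian_product)
  also have "\<dots> = (\<Sum>(j, \<nu>)\<in>A k \<times> msets_with_counts K A.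
                     \<Prod>k'\<in>insert k K. f k' (count (\<nu> + replicate_mset j k) k'))"
  proof (intro sum.cong refl, clarify)
    fix j \<nu> assume "\<nu> \<in> msets_with_counts K A"
    moreover have "(\<Prod>k'\<in>K. f k' (count (\<nu> + replicate_mset j k) k')) = (\<Prod>k'\<in>K. f k' (count \<nu> k'))"
      using insert.hyps by (intro prod.cong) auto
    ultimately show "f k j * (\<Prod>k\<in>K. f k (count \<nu> k))
        = (\<Prod>k'\<in>insert k K. f k' (count (\<nu> + replicate_mset j k) k'))"
      using insert.hyps count_k by simp
  qed
  also have "\<dots> = (\<Sum>\<nu>\<in>msets_with_counts (insert k K) A. \<Prod>k'\<in>insert k K. f k' (count \<nu> k'))"
    unfolding msets_with_counts_insert[OF insert.hyps(2)]
    by (subst sum.reindex[OF inj_on_msets_with_counts_insert[OF insert.hyps(2)]])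
      (simp add: case_prod_beta')
  finally show ?case .
qed simp

lemma submultisets_eq_msets_with_counts:
  "{\<nu>. \<nu> \<subseteq># p} = msets_with_counts (set_mset p) (\<lambda>k. {0..count p k})"
proof (intro equalityI subsetI)
  fix \<nu> assume "\<nu> \<in> {\<nu>. \<nu> \<subseteq># p}"
  then show "\<nu> \<in> msets_with_counts (set_mset p) (\<lambda>k. {0..count p k})"
    by (auto simp: msets_with_counts_def mset_subset_eq_count dest: mset_subset_eqD)
next
  fix \<nu> assume \<nu>: "\<nu> \<in> msets_with_counts (set_mset p) (\<lambda>k. {0..count p k})"
  have "count \<nu> k \<le> count p k" for k
  proof (cases "k \<in># p")
    case False
    then have "k \<notin># \<nu>"
      using \<nu> by (auto simp: msets_with_counts_def)
    then show ?thesis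
      by (simp add: not_in_iff)
  qed (use \<nu> in \<open>simp add: msets_with_counts_def\<close>)
  then show "\<nu> \<in> {\<nu>. \<nu> \<subseteq># p}"
    by (simp add: subseteq_mset_def)
qed

lemma sum_mset_eq_sum_count:
  fixes \<nu> :: "nat multiset"
  assumes "finite K" "set_mset \<nu> \<subseteq> K"
  shows "sum_mset \<nu> = (\<Sum>k\<in>K. k * count \<nu> k)"
  using assms(2)
proof (induction \<nu>)
  case (add x \<nu>)
  have "(\<Sum>k\<in>K. k * count (add_mset x \<nu>) k) = (\<Sum>k\<in>K. k * count \<nu> k + (if k = x then x else 0))"
    by (intro sum.cong) auto
  also have "\<dots> = (\<Sum>k\<in>K. k * count \<nu> k) + x"
    using add.prems assms(1) by (simp add: sum.distrib)
  finally have "(\<Sum>k\<in>K. k * count (add_mset x \<nu>) k) = (\<Sum>k\<in>K. k * count \<nu> k) + x" .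
  with add show ?case
    by simp
qed simp

lemma partitions_of_eq_msets_with_counts:
  "partitions_of d = {\<nu>\<in>msets_with_counts {1..Suc d} (\<lambda>_. {0..d}). sum_mset \<nu> = d}"
proof (intro equalityI subsetI)
  fix p assume "p \<in> partitions_of d"
  then have p0: "0 \<notin># p" and sum_p: "sum_mset p = d"
    by (auto simp: partitions_of_def is_partition_def)
  have support: "set_mset p \<subseteq> {1..Suc d}"
  proof
    fix x assume "x \<in># p"
    then have "x \<le> d"
      using sum_p sum_mset.remove[of x p] by linarith
    moreover have "x \<noteq> 0"
      using p0 \<open>x \<in># p\<close> by metis
    ultimately show "x \<in> {1..Suc d}"
      by simp
  qed
  have "count p k \<le> d" if "k \<in> {1..Suc d}" for k
  proof -
    have "count p k \<le> k * count p k"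
      using that by simp
    also have "\<dots> \<le> (\<Sum>k\<in>{1..Suc d}. k * count p k)"
      using that by (intro member_le_sum) auto
    also have "\<dots> = d"
      using sum_mset_eq_sum_count[OF _ support] sum_p by simp
    finally show ?thesis .
  qed
  with support sum_p show "p \<in> {\<nu>\<in>msets_with_counts {1..Suc d} (\<lambda>_. {0..d}). sum_mset \<nu> = d}"
    by (simp add: msets_with_counts_def)
next
  fix p assume "p \<in> {\<nu>\<in>msets_with_counts {1..Suc d} (\<lambda>_. {0..d}). sum_mset \<nu> = d}"
  then have "set_mset p \<subseteq> {1..Suc d}" "sum_mset p = d"
    by (simp_all add: msets_with_counts_def)
  then show "p \<in> partitions_of d"
    by (auto simp: partitions_of_def is_partition_def)
qed

lemma finite_partitions_of: "finite (partitions_of d)"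
  unfolding partitions_of_eq_msets_with_counts by (simp add: finite_msets_with_counts)

lemma fps_eq_upto_prod_compose_X_power:
  fixes F :: "nat \<Rightarrow> 'a::comm_ring_1 fps"
  assumes K: "finite K" "0 \<notin> K"
  shows "fps_eq_upto d (\<Prod>k\<in>K. F k oo fps_X ^ k)
           (\<Sum>\<nu>\<in>msets_with_counts K (\<lambda>_. {0..d}).
              fps_const (\<Prod>k\<in>K. F k $ count \<nu> k) * fps_X ^ sum_mset \<nu>)"
proof -
  have fps_const_prod: "fps_const (\<Prod>k\<in>K. c k) = (\<Prod>k\<in>K. fps_const (c k))" for c :: "nat \<Rightarrow> 'a"
    by (induction K rule: infinite_finite_induct) (simp_all flip: fps_const_mult)
  have "fps_eq_upto d (\<Prod>k\<in>K. F k oo fps_X ^ k)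
          (\<Prod>k\<in>K. \<Sum>j\<in>{0..d}. fps_const (F k $ j) * fps_X ^ (k * j))"
  proof (intro fps_eq_upto_prod)
    fix k assume "k \<in> K"
    with K have "k \<noteq> 0"
      by metis
    then show "fps_eq_upto d (F k oo fps_X ^ k) (\<Sum>j\<in>{0..d}. fps_const (F k $ j) * fps_X ^ (k * j))"
      using fps_eq_upto_compose[of "fps_X ^ k" d "F k"] by (simp add: power_mult)
  qed
  also have "(\<Prod>k\<in>K. \<Sum>j\<in>{0..d}. fps_const (F k $ j) * fps_X ^ (k * j))
      = (\<Sum>\<nu>\<in>msets_with_counts K (\<lambda>_. {0..d}). \<Prod>k\<in>K. fps_const (F k $ count \<nu> k) * fps_X ^ (k * count \<nu> k))"
    using K by (intro prod_sum_eq_sum_msets_with_counts) simp_all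
  also have "\<dots> = (\<Sum>\<nu>\<in>msets_with_counts K (\<lambda>_. {0..d}).
                     fps_const (\<Prod>k\<in>K. F k $ count \<nu> k) * fps_X ^ sum_mset \<nu>)"
  proof (rule sum.cong[OF refl])
    fix \<nu> assume "\<nu> \<in> msets_with_counts K (\<lambda>_. {0..d})"
    then have "sum_mset \<nu> = (\<Sum>k\<in>K. k * count \<nu> k)"
      using K by (intro sum_mset_eq_sum_count) (auto simp: msets_with_counts_def)
    then show "(\<Prod>k\<in>K. fps_const (F k $ count \<nu> k) * fps_X ^ (k * count \<nu> k))
        = fps_const (\<Prod>k\<in>K. F k $ count \<nu> k) * fps_X ^ sum_mset \<nu>"
      by (simp only: prod.distrib fps_const_prod power_sum)
  qed
  finally show ?thesis .
qed

lemma fps_prod_compose_X_power_nth: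
  fixes F :: "nat \<Rightarrow> 'a::comm_ring_1 fps"
  assumes F0: "\<And>k. F k $ 0 = 1"
  shows "(\<Prod>i\<in>{0..d}. F (Suc i) oo fps_X ^ Suc i) $ d
           = (\<Sum>p\<in>partitions_of d. \<Prod>k\<in>set_mset p. F k $ count p k)"
proof -
  define K where "K = {1..Suc d}"
  define M where "M = msets_with_counts K (\<lambda>_. {0..d})"
  have finite_M: "finite M"
    by (simp add: M_def K_def finite_msets_with_counts)
  have "(\<Prod>i\<in>{0..d}. F (Suc i) oo fps_X ^ Suc i) = (\<Prod>k\<in>K. F k oo fps_X ^ k)"
    unfolding K_def One_nat_def prod.atLeast_Suc_atMost_Suc_shift by (simp only: comp_def)
  also have "fps_eq_upto d \<dots> (\<Sum>\<nu>\<in>M. fps_const (\<Prod>k\<in>K. F k $ count \<nu> k) * fps_X ^ sum_mset \<nu>)"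
    unfolding M_def by (rule fps_eq_upto_prod_compose_X_power) (simp_all add: K_def)
  finally have "(\<Prod>i\<in>{0..d}. F (Suc i) oo fps_X ^ Suc i) $ d
      = (\<Sum>\<nu>\<in>M. if sum_mset \<nu> = d then \<Prod>k\<in>K. F k $ count \<nu> k else 0)"
    by (auto simp: fps_eq_upto_def fps_sum_nth intro!: sum.cong)
  also have "\<dots> = (\<Sum>\<nu>\<in>{\<nu>\<in>M. sum_mset \<nu> = d}. \<Prod>k\<in>K. F k $ count \<nu> k)"
    using finite_M by (simp add: sum.inter_filter)
  also have "\<dots> = (\<Sum>p\<in>partitions_of d. \<Prod>k\<in>set_mset p. F k $ count p k)"
    unfolding partitions_of_eq_msets_with_counts M_def K_def[symmetric]
  proof (intro sum.cong refl)
    fix p assume "p \<in> {\<nu>\<in>msets_with_counts K (\<lambda>_. {0..d}). sum_mset \<nu> = d}"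
    then have "set_mset p \<subseteq> K"
      by (simp add: msets_with_counts_def)
    then show "(\<Prod>k\<in>K. F k $ count p k) = (\<Prod>k\<in>set_mset p. F k $ count p k)"
      using F0 by (intro prod.mono_neutral_right) (auto simp: K_def not_in_iff)
  qed
  finally show ?thesis .
qed

section \<open>Logarithmic, Laguerre and q-Pochhammer series\<close>

definition fps_log_one_minus :: "'a::field_char_0 \<Rightarrow> 'a fps" where
  "fps_log_one_minus c = Abs_fps (\<lambda>n. if n = 0 then 0 else - (c ^ n) / of_nat n)"

lemma is_fps_exp_log_one_minus: "is_fps_exp (1 - fps_const c * fps_X) (fps_log_one_minus c)"
proof -
  have deriv: "fps_deriv (fps_log_one_minus c) = Abs_fps (\<lambda>n. - (c ^ Suc n))"
    by (simp add: fps_eq_iff fps_log_one_minus_def fps_deriv_nth del: of_nat_Suc)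
  have "c ^ n = c * c ^ (n - 1)" if "0 < n" for n
    using that by (cases n) simp_all
  then have "(1 - fps_const c * fps_X) * fps_deriv (fps_log_one_minus c) = - fps_const c"
    unfolding deriv by (auto simp: fps_eq_iff algebra_simps)
  then show ?thesis
    by (simp add: is_fps_exp_def fps_log_one_minus_def)
qed

lemma fps_inverse_one_minus_X: "inverse (1 - fps_X :: 'a::field fps) = Abs_fps (\<lambda>_. 1)"
  by (metis fps_inverse_gp' fps_inverse_idempotent fps_nth_Abs_fps one_neq_zero)

lemma fps_X_div_one_minus_X_power_nth:
  fixes n i :: nat
  shows "((fps_X * inverse (1 - fps_X)) ^ i * inverse (1 - fps_X) :: 'a::field_char_0 fps) $ n
           = of_nat (n choose i)"
proof (induction i arbitrary: n)
  case 0
  then show ?case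
    by (simp add: fps_inverse_one_minus_X)
next
  case (Suc i)
  have partial_sums: "(f * inverse (1 - fps_X)) $ m = (\<Sum>j\<in>{0..m}. f $ j)" for f :: "'a fps" and m
    by (simp add: fps_mult_nth fps_inverse_one_minus_X)
  show ?case
  proof (cases n)
    case (Suc m)
    have "((fps_X * inverse (1 - fps_X)) ^ Suc i * inverse (1 - fps_X) :: 'a fps) $ n
        = (((fps_X * inverse (1 - fps_X)) ^ i * inverse (1 - fps_X)) * inverse (1 - fps_X)) $ m"
      by (simp add: Suc algebra_simps fps_X_mult_nth)
    also have "\<dots> = (\<Sum>j\<in>{0..m}. ((fps_X * inverse (1 - fps_X)) ^ i * inverse (1 - fps_X)) $ j)"
      by (rule partial_sums)
    also have "\<dots> = of_nat (\<Sum>j\<le>m. j choose i)"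
      by (simp add: Suc.IH atLeast0AtMost)
    also have "\<dots> = of_nat (n choose Suc i)"
      by (simp add: Suc sum_choose_upper)
    finally show ?thesis .
  qed (simp add: fps_X_mult_nth)
qed

(* The n-th coefficient is the Laguerre polynomial L_n evaluated at -c. *)
definition laguerre_fps :: "'a::field_char_0 \<Rightarrow> 'a fps" where
  "laguerre_fps c = Abs_fps (\<lambda>n. \<Sum>i\<in>{0..n}. of_nat (n choose i) * c ^ i / fact i)"

lemma laguerre_fps_eq:
  "laguerre_fps c = inverse (1 - fps_X) * (fps_exp c oo fps_X * inverse (1 - fps_X))"
proof (rule fps_ext)
  fix n
  let ?K = "fps_X * inverse (1 - fps_X) :: 'a fps"
  have "fps_eq_upto n (inverse (1 - fps_X) * (fps_exp c oo ?K))
          (inverse (1 - fps_X) * (\<Sum>i\<in>{0..n}. fps_const (fps_exp c $ i) * ?K ^ i))"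
    by (intro fps_eq_upto_mult fps_eq_upto_refl fps_eq_upto_compose) simp
  then have "(inverse (1 - fps_X) * (fps_exp c oo ?K)) $ n
      = (\<Sum>i\<in>{0..n}. fps_const (fps_exp c $ i) * (?K ^ i * inverse (1 - fps_X))) $ n"
    by (simp add: fps_eq_upto_def sum_distrib_left algebra_simps)
  also have "\<dots> = (\<Sum>i\<in>{0..n}. c ^ i / fact i * of_nat (n choose i))"
    by (simp add: fps_sum_nth fps_X_div_one_minus_X_power_nth)
  finally show "laguerre_fps c $ n = (inverse (1 - fps_X) * (fps_exp c oo ?K)) $ n"
    by (simp add: laguerre_fps_def algebra_simps)
qed

lemma is_fps_exp_laguerre_fps:
  "is_fps_exp (laguerre_fps c)
     (- fps_log_one_minus 1 + fps_const c * (fps_X * inverse (1 - fps_X)))"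
proof -
  have "is_fps_exp (inverse (1 - fps_X)) (- fps_log_one_minus 1)"
    using is_fps_exp_inverse[OF is_fps_exp_log_one_minus[of 1]] by simp
  then show ?thesis
    unfolding laguerre_fps_eq by (intro is_fps_exp_mult is_fps_exp_fps_exp) simp_all
qed

definition qpoch_log :: "'a::field_char_0 \<Rightarrow> 'a fps" where
  "qpoch_log a = fps_infsum (\<lambda>i. fps_log_one_minus a oo fps_X ^ Suc i)"

lemma qpoch_inf_eq_infprod:
  "qpoch_inf a = fps_infprod (\<lambda>i. (1 - fps_const a * fps_X) oo fps_X ^ Suc i)"
proof -
  have "(1 - fps_const a * fps_X) oo fps_X ^ Suc i = 1 - fps_const a * fps_X ^ (i + 1)" for i
    by (simp add: fps_compose_sub_distrib flip: fps_const_mult_apply_left)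
  then show ?thesis
    by (simp add: qpoch_inf_def fps_infprod_def)
qed

lemma is_fps_exp_qpoch_inf: "is_fps_exp (qpoch_inf a) (qpoch_log a)"
  unfolding qpoch_inf_eq_infprod qpoch_log_def
  by (rule is_fps_exp_infprod_compose_X_power) (rule is_fps_exp_log_one_minus)

lemma qpoch_log_nth:
  assumes "0 < n"
  shows "qpoch_log a $ n = - (\<Sum>k | k dvd n. a ^ k / of_nat k)"
proof -
  have "qpoch_log a $ n = (\<Sum>k | k dvd n. - (a ^ (n div k)) / of_nat (n div k))"
    unfolding qpoch_log_def fps_infsum_compose_X_power_nth[OF assms, of "\<lambda>_. fps_log_one_minus a"]
    using assms by (intro sum.cong refl) (auto simp: fps_log_one_minus_def elim: dvdE)
  also have "\<dots> = (\<Sum>k | k dvd n. - (a ^ k) / of_nat k)"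
    using assms by (intro sum.reindex_bij_witness[of _ "(div) n" "(div) n"]) (auto elim: dvdE)
  finally show ?thesis
    by (simp add: sum_negf)
qed

lemma fps_infsum_X_div_one_minus_X_nth:
  assumes "0 < n"
  shows "fps_infsum (\<lambda>i. fps_const (c (Suc i)) * (fps_X * inverse (1 - fps_X)) oo fps_X ^ Suc i) $ n
           = (\<Sum>k | k dvd n. c k :: 'a::field)"
  unfolding fps_infsum_compose_X_power_nth[OF assms, of "\<lambda>k. fps_const (c k) * (fps_X * inverse (1 - fps_X))"]
  using assms by (intro sum.cong refl) (auto simp: fps_X_mult_nth fps_inverse_one_minus_X elim: dvdE)

section \<open>Diagonal matrix elements of the vertex operator\<close>

lemma prod_mset_image_eq_prod_power:
  assumes "finite K" "set_mset \<nu> \<subseteq> K"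
  shows "(\<Prod>k\<in>#\<nu>. f k) = (\<Prod>k\<in>K. f k ^ count \<nu> k)"
  unfolding image_prod_mset_multiplicity using assms
  by (intro prod.mono_neutral_left) (auto simp: not_in_iff)

lemma pochhammer_eq_fact_mult_choose:
  assumes "j \<le> m"
  shows "pochhammer (of_nat (m - j) + 1) j = fact j * (of_nat (m choose j) :: 'a::field_char_0)"
proof -
  have "(of_nat (m choose j) :: 'a) = pochhammer (of_nat m - of_nat j + 1) j / fact j"
    by (simp add: binomial_gbinomial gbinomial_pochhammer')
  then show ?thesis
    using assms by (simp add: of_nat_diff)
qed

definition mset_fact :: "'a multiset \<Rightarrow> 'b::{comm_monoid_mult,semiring_char_0}" where
  "mset_fact \<nu> = (\<Prod>x\<in>set_mset \<nu>. fact (count \<nu> x))"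

lemma mset_fact_eq_prod:
  "finite K \<Longrightarrow> set_mset \<nu> \<subseteq> K \<Longrightarrow> mset_fact \<nu> = (\<Prod>k\<in>K. fact (count \<nu> k))"
  unfolding mset_fact_def by (intro prod.mono_neutral_left) (auto simp: not_in_iff)

lemma lists_mset_in_eq_UNION_permutations:
  "{ks. mset ks \<in> P} = (\<Union>\<nu>\<in>P. permutations_of_multiset \<nu>)"
  by (auto simp: permutations_of_multiset_def)

lemma finite_lists_mset_in: "finite P \<Longrightarrow> finite {ks. mset ks \<in> P}"
  by (simp add: lists_mset_in_eq_UNION_permutations)

lemma sum_lists_by_mset:
  fixes \<phi> :: "'a multiset \<Rightarrow> 'b::field_char_0"
  assumes "finite P"
  shows "(\<Sum>ks | mset ks \<in> P. \<phi> (mset ks) / fact (length ks)) = (\<Sum>\<nu>\<in>P. \<phi> \<nu> / mset_fact \<nu>)"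
proof -
  have "(\<Sum>ks | mset ks \<in> P. \<phi> (mset ks) / fact (length ks))
      = (\<Sum>\<nu>\<in>P. \<Sum>ks\<in>permutations_of_multiset \<nu>. \<phi> (mset ks) / fact (length ks))"
    unfolding lists_mset_in_eq_UNION_permutations
    by (rule sum.UNION_disjoint[OF assms]; (simp | auto simp: permutations_of_multiset_def))
  also have "\<dots> = (\<Sum>\<nu>\<in>P. of_nat (card (permutations_of_multiset \<nu>)) * (\<phi> \<nu> / fact (size \<nu>)))"
  proof (intro sum.cong refl)
    fix \<nu>
    have "(\<Sum>ks\<in>permutations_of_multiset \<nu>. \<phi> (mset ks) / fact (length ks))
        = (\<Sum>ks\<in>permutations_of_multiset \<nu>. \<phi> \<nu> / fact (size \<nu>))"
      by (intro sum.cong refl) (auto simp: permutations_of_multiset_def)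
    then show "(\<Sum>ks\<in>permutations_of_multiset \<nu>. \<phi> (mset ks) / fact (length ks))
        = of_nat (card (permutations_of_multiset \<nu>)) * (\<phi> \<nu> / fact (size \<nu>))"
      by simp
  qed
  also have "\<dots> = (\<Sum>\<nu>\<in>P. \<phi> \<nu> / mset_fact \<nu>)"
  proof (intro sum.cong refl)
    fix \<nu> :: "'a multiset"
    have "of_nat (card (permutations_of_multiset \<nu>)) * mset_fact \<nu> = (fact (size \<nu>) :: 'b)"
      using card_permutations_of_multiset_aux[of \<nu>]
      unfolding mset_fact_def by (metis (mono_tags, lifting) of_nat_fact of_nat_mult of_nat_prod prod.cong)
    moreover have "mset_fact \<nu> \<noteq> (0 :: 'b)"
      by (simp add: mset_fact_def)
    ultimately show "of_nat (card (permutations_of_multiset \<nu>)) * (\<phi> \<nu> / fact (size \<nu>)) = \<phi> \<nu> / mset_fact \<nu>"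
      by (simp add: field_simps)
  qed
  finally show ?thesis .
qed

lemma prod_ops_Nil [simp]: "prod_ops X [] = id"
  by (simp add: prod_ops_def)

lemma prod_ops_Cons [simp]: "prod_ops X (k # ks) = X k \<circ> prod_ops X ks"
  by (simp add: prod_ops_def)

lemma prod_ops_a_minus:
  "prod_ops (\<lambda>k. scale_op (\<alpha> k) (a_minus k)) ks f \<mu>
     = (\<Prod>k\<in>#mset ks. \<alpha> k) * (if mset ks \<subseteq># \<mu> then f (\<mu> - mset ks) else 0)"
proof (induction ks arbitrary: \<mu>)
  case (Cons k ks)
  have "prod_ops (\<lambda>k. scale_op (\<alpha> k) (a_minus k)) (k # ks) f \<mu>
      = \<alpha> k * (if k \<in># \<mu> then (\<Prod>k\<in>#mset ks. \<alpha> k) *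
           (if mset ks \<subseteq># \<mu> - {#k#} then f (\<mu> - {#k#} - mset ks) else 0) else 0)"
    by (simp add: scale_op_def a_minus_def Cons.IH)
  also have "\<dots> = (\<Prod>k\<in>#mset (k # ks). \<alpha> k)
      * (if mset (k # ks) \<subseteq># \<mu> then f (\<mu> - mset (k # ks)) else 0)"
    by (auto simp: insert_subset_eq_iff)
  finally show ?case .
qed simp

definition a_plus_weight :: "nat multiset \<Rightarrow> nat multiset \<Rightarrow> 'a::comm_semiring_1" where
  "a_plus_weight \<mu> \<nu> = (\<Prod>k\<in>set_mset \<nu>. pochhammer (of_nat (count \<mu> k) + 1) (count \<nu> k))"

lemma a_plus_weight_eq_prod:
  "finite K \<Longrightarrow> set_mset \<nu> \<subseteq> K
     \<Longrightarrow> a_plus_weight \<mu> \<nu> = (\<Prod>k\<in>K. pochhammer (of_nat (count \<mu> k) + 1) (count \<nu> k))"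
  unfolding a_plus_weight_def by (intro prod.mono_neutral_left) (auto simp: not_in_iff)

lemma a_plus_weight_add_mset:
  "(of_nat (count \<mu> k) + 1 :: 'a::comm_semiring_1) * a_plus_weight (add_mset k \<mu>) \<nu>
     = a_plus_weight \<mu> (add_mset k \<nu>)"
proof -
  define K where "K = insert k (set_mset \<nu>)"
  have K: "finite K" "k \<in> K" "set_mset \<nu> \<subseteq> K" "set_mset (add_mset k \<nu>) \<subseteq> K"
    by (auto simp: K_def)
  let ?rest = "\<Prod>j\<in>K - {k}. pochhammer (of_nat (count \<mu> j) + 1 :: 'a) (count \<nu> j)"
  have "a_plus_weight (add_mset k \<mu>) \<nu> = pochhammer (of_nat (Suc (count \<mu> k)) + 1) (count \<nu> k) * ?rest"
    using K by (simp add: a_plus_weight_eq_prod[of K] prod.remove del: of_nat_Suc)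
  moreover have "a_plus_weight \<mu> (add_mset k \<nu>)
      = pochhammer (of_nat (count \<mu> k) + 1) (Suc (count \<nu> k)) * ?rest"
    using K by (simp add: a_plus_weight_eq_prod[of K] prod.remove)
  ultimately show ?thesis
    by (simp add: pochhammer_rec ac_simps)
qed

lemma prod_ops_a_plus:
  "prod_ops (\<lambda>k. scale_op (\<beta> k) (a_plus \<kappa> k)) ks f \<mu>
     = (\<Prod>k\<in>#mset ks. \<beta> k * (\<kappa> * of_nat k)) * a_plus_weight \<mu> (mset ks) * f (\<mu> + mset ks)"
proof (induction ks arbitrary: \<mu>)
  case (Cons k ks)
  have "prod_ops (\<lambda>k. scale_op (\<beta> k) (a_plus \<kappa> k)) (k # ks) f \<mu>
      = \<beta> k * (\<kappa> * of_nat k) * (\<Prod>k\<in>#mset ks. \<beta> k * (\<kappa> * of_nat k))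
        * ((of_nat (count \<mu> k) + 1) * a_plus_weight (add_mset k \<mu>) (mset ks)) * f (add_mset k \<mu> + mset ks)"
    by (simp add: scale_op_def a_plus_def Cons.IH algebra_simps)
  also have "\<dots> = (\<Prod>k\<in>#mset (k # ks). \<beta> k * (\<kappa> * of_nat k)) * a_plus_weight \<mu> (mset (k # ks))
        * f (\<mu> + mset (k # ks))"
    by (simp only: a_plus_weight_add_mset) (simp add: algebra_simps)
  finally show ?case .
qed (simp add: a_plus_weight_def)

lemma mset_in_partitions_of_iff:
  "mset ks \<in> partitions_of n \<longleftrightarrow> (\<forall>k\<in>set ks. 1 \<le> k) \<and> sum_list ks = n"
proof -
  have "(\<forall>k\<in>set ks. 1 \<le> k) \<longleftrightarrow> 0 \<notin> set ks"
    by (induction ks) auto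
  then show ?thesis
    by (simp add: partitions_of_def is_partition_def sum_mset_sum_list)
qed

lemma lists_mset_in_partitions_of:
  "{ks. mset ks \<in> partitions_of n} = (\<Union>m\<in>{0..n}. compositions n m)"
proof -
  have "length ks \<le> sum_list ks" if "\<forall>k\<in>set ks. 1 \<le> k" for ks :: "nat list"
    using that by (induction ks) auto
  then show ?thesis
    by (auto simp: mset_in_partitions_of_iff compositions_def)
qed

lemma exp_coeff_eq_sum_partitions:
  assumes "\<And>ks. prod_ops X ks f \<mu> = \<phi> (mset ks)"
  shows "exp_coeff X n f \<mu> = (\<Sum>\<nu>\<in>partitions_of n. \<phi> \<nu> / mset_fact \<nu>)"
proof -
  have finite_compositions: "finite (compositions n m)" for m
    by (rule finite_subset[OF _ finite_lists_mset_in[OF finite_partitions_of[of n]]])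
      (auto simp: mset_in_partitions_of_iff compositions_def)
  have "exp_coeff X n f \<mu> = (\<Sum>m\<in>{0..n}. \<Sum>ks\<in>compositions n m. \<phi> (mset ks) / fact (length ks))"
    unfolding exp_coeff_def sum_op_def scale_op_def assms
    by (auto simp: sum_distrib_left compositions_def intro!: sum.cong)
  also have "\<dots> = (\<Sum>ks | mset ks \<in> partitions_of n. \<phi> (mset ks) / fact (length ks))"
    unfolding lists_mset_in_partitions_of
    by (rule sum.UNION_disjoint[symmetric]) (auto simp: finite_compositions, auto simp: compositions_def)
  also have "\<dots> = (\<Sum>\<nu>\<in>partitions_of n. \<phi> \<nu> / mset_fact \<nu>)"
    by (rule sum_lists_by_mset[OF finite_partitions_of])
  finally show ?thesis .
qed

lemma E_minus_coeff_eq: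
  "E_minus_coeff q1 q2 n g \<mu> = (\<Sum>\<nu>\<in>partitions_of n.
     (\<Prod>k\<in>#\<nu>. (q1 ^ k - q2 ^ k) / of_nat k) * (if \<nu> \<subseteq># \<mu> then g (\<mu> - \<nu>) else 0) / mset_fact \<nu>)"
  unfolding E_minus_coeff_def by (rule exp_coeff_eq_sum_partitions) (rule prod_ops_a_minus)

lemma E_plus_coeff_eq:
  "E_plus_coeff \<kappa> t1 t2 n g \<mu> = (\<Sum>\<nu>\<in>partitions_of n.
     (\<Prod>k\<in>#\<nu>. \<kappa> * (t2 ^ k - t1 ^ k)) * a_plus_weight \<mu> \<nu> * g (\<mu> + \<nu>) / mset_fact \<nu>)"
proof -
  have "(t2 ^ k - t1 ^ k) / of_nat k * (\<kappa> * of_nat k) = \<kappa> * (t2 ^ k - t1 ^ k)" for k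
    by (cases "k = 0") simp_all
  then show ?thesis
    unfolding E_plus_coeff_def by (intro exp_coeff_eq_sum_partitions) (simp add: prod_ops_a_plus)
qed

lemma E_plus_coeff_basis_vec:
  assumes "\<nu> \<in> partitions_of n" "\<nu> \<subseteq># p"
  shows "E_plus_coeff \<kappa> t1 t2 n (basis_vec p) (p - \<nu>)
           = (\<Prod>k\<in>#\<nu>. \<kappa> * (t2 ^ k - t1 ^ k)) * a_plus_weight (p - \<nu>) \<nu> / mset_fact \<nu>"
proof -
  have "p - \<nu> + \<nu>' = p \<longleftrightarrow> \<nu>' = \<nu>" for \<nu>'
    using assms(2) by (metis add_left_cancel subset_mset.diff_add)
  then have "E_plus_coeff \<kappa> t1 t2 n (basis_vec p) (p - \<nu>) = (\<Sum>\<nu>'\<in>partitions_of n.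
      if \<nu>' = \<nu> then (\<Prod>k\<in>#\<nu>. \<kappa> * (t2 ^ k - t1 ^ k)) * a_plus_weight (p - \<nu>) \<nu> / mset_fact \<nu> else 0)"
    unfolding E_plus_coeff_eq by (intro sum.cong refl) (simp add: basis_vec_def)
  then show ?thesis
    using assms(1) by (simp add: sum.delta finite_partitions_of)
qed

definition mode_weight :: "complex \<Rightarrow> complex \<Rightarrow> complex \<Rightarrow> complex \<Rightarrow> complex \<Rightarrow> nat \<Rightarrow> complex" where
  "mode_weight \<kappa> q1 q2 t1 t2 k = \<kappa> * (q1 ^ k - q2 ^ k) * (t2 ^ k - t1 ^ k) / of_nat k"

lemma V0_diag_term_eq_prod:
  assumes "\<nu> \<subseteq># p"
  shows "(\<Prod>k\<in>#\<nu>. (q1 ^ k - q2 ^ k) / of_nat k) * (\<Prod>k\<in>#\<nu>. \<kappa> * (t2 ^ k - t1 ^ k))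
           * a_plus_weight (p - \<nu>) \<nu> / (mset_fact \<nu>)\<^sup>2
         = (\<Prod>k\<in>set_mset p. of_nat (count p k choose count \<nu> k)
              * mode_weight \<kappa> q1 q2 t1 t2 k ^ count \<nu> k / fact (count \<nu> k))"
proof -
  define K where "K = set_mset p"
  have K: "finite K" "set_mset \<nu> \<subseteq> K"
    using assms by (auto simp: K_def dest: mset_subset_eqD)
  have "a_plus_weight (p - \<nu>) \<nu> = (\<Prod>k\<in>K. fact (count \<nu> k) * of_nat (count p k choose count \<nu> k) :: complex)"
    unfolding a_plus_weight_eq_prod[OF K]
  proof (intro prod.cong refl)
    fix k
    have "count \<nu> k \<le> count p k"
      using assms by (simp add: mset_subset_eq_count)
    then show "pochhammer (of_nat (count (p - \<nu>) k) + 1) (count \<nu> k)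
        = fact (count \<nu> k) * (of_nat (count p k choose count \<nu> k) :: complex)"
      using pochhammer_eq_fact_mult_choose by simp
  qed
  moreover have "(q1 ^ k - q2 ^ k) / of_nat k * (\<kappa> * (t2 ^ k - t1 ^ k)) = mode_weight \<kappa> q1 q2 t1 t2 k" for k
    by (cases "k = 0") (simp_all add: mode_weight_def)
  ultimately show ?thesis
    by (simp add: K_def[symmetric] prod_mset_image_eq_prod_power[OF K] mset_fact_eq_prod[OF K]
        power2_eq_square flip: prod.distrib prod_dividef power_mult_distrib) (simp add: ac_simps)
qed

lemma sum_partitions_upto_eq_sum_submultisets:
  assumes "is_partition p"
  shows "(\<Sum>n\<in>{0..sum_mset p}. \<Sum>\<nu>\<in>partitions_of n. if \<nu> \<subseteq># p then h \<nu> else 0)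
           = (\<Sum>\<nu> | \<nu> \<subseteq># p. h \<nu>)"
proof -
  have "(\<Sum>n\<in>{0..sum_mset p}. \<Sum>\<nu>\<in>partitions_of n. if \<nu> \<subseteq># p then h \<nu> else 0)
      = (\<Sum>n\<in>{0..sum_mset p}. \<Sum>\<nu>\<in>{\<nu>\<in>partitions_of n. \<nu> \<subseteq># p}. h \<nu>)"
    by (simp add: sum.inter_filter finite_partitions_of)
  also have "\<dots> = (\<Sum>\<nu>\<in>(\<Union>n\<in>{0..sum_mset p}. {\<nu>\<in>partitions_of n. \<nu> \<subseteq># p}). h \<nu>)"
    by (rule sum.UNION_disjoint[symmetric]) (auto simp: finite_partitions_of, auto simp: partitions_of_def)
  also have "(\<Union>n\<in>{0..sum_mset p}. {\<nu>\<in>partitions_of n. \<nu> \<subseteq># p}) = {\<nu>. \<nu> \<subseteq># p}"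
  proof (intro equalityI subsetI)
    fix \<nu> assume "\<nu> \<in> {\<nu>. \<nu> \<subseteq># p}"
    then have "\<nu> \<subseteq># p"
      by simp
    then have "sum_mset p = sum_mset \<nu> + sum_mset (p - \<nu>)"
      by (metis subset_mset.add_diff_inverse sum_mset.union)
    moreover have "is_partition \<nu>"
      using assms \<open>\<nu> \<subseteq># p\<close> by (auto simp: is_partition_def dest: mset_subset_eqD)
    ultimately show "\<nu> \<in> (\<Union>n\<in>{0..sum_mset p}. {\<nu>\<in>partitions_of n. \<nu> \<subseteq># p})"
      using \<open>\<nu> \<subseteq># p\<close> by (auto simp: partitions_of_def)
  qed auto
  finally show ?thesis .
qed

lemma V0_basis_vec_diag:
  assumes "is_partition p"
  shows "V0 \<kappa> q1 q2 t1 t2 (basis_vec p) p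
           = (\<Prod>k\<in>set_mset p. laguerre_fps (mode_weight \<kappa> q1 q2 t1 t2 k) $ count p k)"
proof -
  define T where "T \<nu> = (\<Prod>k\<in>#\<nu>. (q1 ^ k - q2 ^ k) / of_nat k) * (\<Prod>k\<in>#\<nu>. \<kappa> * (t2 ^ k - t1 ^ k))
    * a_plus_weight (p - \<nu>) \<nu> / (mset_fact \<nu>)\<^sup>2" for \<nu>
  define g where "g k j = of_nat (count p k choose j) * mode_weight \<kappa> q1 q2 t1 t2 k ^ j / fact j" for k j
  have "V0 \<kappa> q1 q2 t1 t2 (basis_vec p) p
      = (\<Sum>n\<in>{0..sum_mset p}. \<Sum>\<nu>\<in>partitions_of n. if \<nu> \<subseteq># p then T \<nu> else 0)"
    unfolding V0_def E_minus_coeff_eq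
    by (intro sum.cong refl) (simp add: E_plus_coeff_basis_vec T_def power2_eq_square)
  also have "\<dots> = (\<Sum>\<nu> | \<nu> \<subseteq># p. T \<nu>)"
    by (rule sum_partitions_upto_eq_sum_submultisets[OF assms])
  also have "\<dots> = (\<Sum>\<nu>\<in>msets_with_counts (set_mset p) (\<lambda>k. {0..count p k}). \<Prod>k\<in>set_mset p. g k (count \<nu> k))"
    unfolding submultisets_eq_msets_with_counts[symmetric]
    by (intro sum.cong refl) (simp add: T_def g_def V0_diag_term_eq_prod)
  also have "\<dots> = (\<Prod>k\<in>set_mset p. \<Sum>j\<in>{0..count p k}. g k j)"
    by (rule prod_sum_eq_sum_msets_with_counts[symmetric]) simp_all
  also have "\<dots> = (\<Prod>k\<in>set_mset p. laguerre_fps (mode_weight \<kappa> q1 q2 t1 t2 k) $ count p k)"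
    by (simp add: g_def laguerre_fps_def)
  finally show ?thesis .
qed

lemma graded_trace_V0:
  "graded_trace (V0 \<kappa> q1 q2 t1 t2)
     = fps_infprod (\<lambda>i. laguerre_fps (mode_weight \<kappa> q1 q2 t1 t2 (Suc i)) oo fps_X ^ Suc i)"
proof (rule fps_ext)
  fix d
  have "graded_trace (V0 \<kappa> q1 q2 t1 t2) $ d
      = (\<Sum>p\<in>partitions_of d. \<Prod>k\<in>set_mset p. laguerre_fps (mode_weight \<kappa> q1 q2 t1 t2 k) $ count p k)"
    unfolding graded_trace_def by (auto simp: partitions_of_def V0_basis_vec_diag intro!: sum.cong)
  also have "\<dots> = (\<Prod>i\<in>{0..d}. laguerre_fps (mode_weight \<kappa> q1 q2 t1 t2 (Suc i)) oo fps_X ^ Suc i) $ d"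
    by (rule fps_prod_compose_X_power_nth[symmetric]) (simp add: laguerre_fps_def)
  finally show "graded_trace (V0 \<kappa> q1 q2 t1 t2) $ d
      = fps_infprod (\<lambda>i. laguerre_fps (mode_weight \<kappa> q1 q2 t1 t2 (Suc i)) oo fps_X ^ Suc i) $ d"
    by (simp add: fps_infprod_def)
qed

section \<open>Logarithms of both sides\<close>

lemma is_fps_exp_fock_expect_V0:
  "is_fps_exp (fock_expect (V0 \<kappa> q1 q2 t1 t2))
     (fps_infsum (\<lambda>i. fps_const (mode_weight \<kappa> q1 q2 t1 t2 (Suc i)) * (fps_X * inverse (1 - fps_X))
                      oo fps_X ^ Suc i))"
proof -
  let ?c = "mode_weight \<kappa> q1 q2 t1 t2" and ?K = "fps_X * inverse (1 - fps_X) :: complex fps"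
  have "is_fps_exp (fock_expect (V0 \<kappa> q1 q2 t1 t2))
      (qpoch_log 1 + fps_infsum (\<lambda>i. (- fps_log_one_minus 1 + fps_const (?c (Suc i)) * ?K) oo fps_X ^ Suc i))"
    unfolding fock_expect_def graded_trace_V0
    by (intro is_fps_exp_mult is_fps_exp_qpoch_inf is_fps_exp_infprod_compose_X_power
        is_fps_exp_laguerre_fps)
  also have "qpoch_log 1 + fps_infsum (\<lambda>i. (- fps_log_one_minus 1 + fps_const (?c (Suc i)) * ?K) oo fps_X ^ Suc i)
      = fps_infsum (\<lambda>i. fps_const (?c (Suc i)) * ?K oo fps_X ^ Suc i)"
    unfolding qpoch_log_def fps_infsum_add by (simp add: fps_compose_add_distrib fps_compose_sub_distrib)
  finally show ?thesis .
qed

lemma is_fps_exp_pow_gen_qpoch_ratio: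
  "is_fps_exp (fps_pow_gen (qpoch_inf a * qpoch_inf b / (qpoch_inf c * qpoch_inf d)) \<kappa>)
     (fps_const \<kappa> * (qpoch_log a + qpoch_log b - qpoch_log c - qpoch_log d))"
proof -
  have num: "is_fps_exp (qpoch_inf a * qpoch_inf b) (qpoch_log a + qpoch_log b)"
    and den: "is_fps_exp (qpoch_inf c * qpoch_inf d) (qpoch_log c + qpoch_log d)"
    by (intro is_fps_exp_mult is_fps_exp_qpoch_inf)+
  then have "(qpoch_inf c * qpoch_inf d) $ 0 \<noteq> 0"
    by (simp add: is_fps_exp_def)
  then have "is_fps_exp (qpoch_inf a * qpoch_inf b / (qpoch_inf c * qpoch_inf d))
      (qpoch_log a + qpoch_log b - qpoch_log c - qpoch_log d)"
    using is_fps_exp_mult[OF num is_fps_exp_inverse[OF den]] by (simp add: fps_divide_unit algebra_simps)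
  then show ?thesis
    by (rule is_fps_exp_fps_pow_gen)
qed

lemma fps_infsum_mode_weight_eq_qpoch_log:
  "fps_infsum (\<lambda>i. fps_const (mode_weight \<kappa> q1 q2 t1 t2 (Suc i)) * (fps_X * inverse (1 - fps_X))
                   oo fps_X ^ Suc i)
     = fps_const \<kappa> * (qpoch_log (q1 * t1) + qpoch_log (q2 * t2) - qpoch_log (q1 * t2) - qpoch_log (q2 * t1))"
proof (rule fps_ext)
  fix n
  show "fps_infsum (\<lambda>i. fps_const (mode_weight \<kappa> q1 q2 t1 t2 (Suc i)) * (fps_X * inverse (1 - fps_X))
                   oo fps_X ^ Suc i) $ n
     = (fps_const \<kappa> * (qpoch_log (q1 * t1) + qpoch_log (q2 * t2) - qpoch_log (q1 * t2) - qpoch_log (q2 * t1))) $ n"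
  proof (cases "n = 0")
    case True
    then show ?thesis
      by (simp add: fps_infsum_def qpoch_log_def fps_compose_nth fps_log_one_minus_def)
  next
    case False
    then have n: "0 < n"
      by simp
    let ?a = "q1 * t1" and ?b = "q2 * t2" and ?c = "q1 * t2" and ?d = "q2 * t1"
    have "(fps_const \<kappa> * (qpoch_log ?a + qpoch_log ?b - qpoch_log ?c - qpoch_log ?d)) $ n
        = \<kappa> * ((\<Sum>k | k dvd n. ?c ^ k / of_nat k) + (\<Sum>k | k dvd n. ?d ^ k / of_nat k)
                - (\<Sum>k | k dvd n. ?a ^ k / of_nat k) - (\<Sum>k | k dvd n. ?b ^ k / of_nat k))"
      by (simp add: qpoch_log_nth[OF n])
    also have "\<dots> = (\<Sum>k | k dvd n. \<kappa> * (?c ^ k / of_nat k + ?d ^ k / of_nat k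
                                       - ?a ^ k / of_nat k - ?b ^ k / of_nat k))"
      by (simp only: sum_distrib_left[symmetric] sum.distrib sum_subtractf)
    also have "\<dots> = (\<Sum>k | k dvd n. mode_weight \<kappa> q1 q2 t1 t2 k)"
      by (intro sum.cong refl)
        (simp add: mode_weight_def power_mult_distrib algebra_simps flip: add_divide_distrib diff_divide_distrib)
    finally show ?thesis
      by (simp only: fps_infsum_X_div_one_minus_X_nth[OF n])
  qed
qed

theorem theorem4p2:
  fixes \<kappa> q1 q2 t1 t2 :: complex
  shows "fock_expect (V0 \<kappa> q1 q2 t1 t2) =
    fps_pow_gen (qpoch_inf (q1 * t1) * qpoch_inf (q2 * t2) /
                 (qpoch_inf (q1 * t2) * qpoch_inf (q2 * t1))) \<kappa>"
  using is_fps_exp_fock_expect_V0[of \<kappa> q1 q2 t1 t2]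
  unfolding fps_infsum_mode_weight_eq_qpoch_log
  by (rule is_fps_exp_unique_exp[OF _ is_fps_exp_pow_gen_qpoch_ratio])

end
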